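(* Let $n\ge1$ and let $A$ be a set with an $(n+1)$-ary operation $\theta$, binary operations $\alpha_1,\dots,\alpha_n$ and elements $e_1,\dots,e_n$ such that $\alpha_i(a,a)=e_i$ and $\theta(\alpha_1(a,b),\dots,\alpha_n(a,b),b)=a$ for all $a,b\in A$, and suppose $\theta$ is 2-associative, i.e. $\theta(a_1,\dots,a_n,\theta(b_1,\dots,b_n,c))=\theta(\theta(a_1,\dots,a_n,b_1),\dots,\theta(a_1,\dots,a_n,b_n),c)$ for all elements. Then for any $b,c\in A$ there is $a\in A$ with $\theta(a,a,\dots,a,b)=c$; one can take $$a=\theta\big(\alpha_1(c,\theta(b,b,\dots,b)),\alpha_2(c,\theta(b,b,\dots,b)),\dots,\alpha_n(c,\theta(b,b,\dots,b)),b\big).$$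
   Context: $\theta(b,b,\dots,b)$ denotes $\theta$ applied to $n+1$ copies of $b$; $\theta(a,\dots,a,b)$ has $a$ in the first $n$ arguments. *)

theory Defs
  imports Main
begin

text \<open>An (n+1)-ary operation theta on a carrier A is modelled as a function on lists,
  only meaningful on lists of length n+1 with entries in A. Indices of alpha and e are
  0-based: alpha i, e i for i < n correspond to alpha_(i+1), e_(i+1).\<close>

definition two_associative :: "'a set \<Rightarrow> nat \<Rightarrow> ('a list \<Rightarrow> 'a) \<Rightarrow> bool" where
  "two_associative A n \<theta> \<longleftrightarrow>
     (\<forall>as bs c. length as = n \<longrightarrow> length bs = n \<longrightarrow> set as \<subseteq> A \<longrightarrow> set bs \<subseteq> A \<longrightarrow> c \<in> A \<longrightarrow>
        \<theta> (as @ [\<theta> (bs @ [c])]) = \<theta> (map (\<lambda>b. \<theta> (as @ [b])) bs @ [c]))"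

end

theory Submission
  imports Defs
begin

text \<open>Put \<open>d = \<theta>(b,\<dots>,b)\<close> and \<open>a = \<theta>(x\<^sub>1,\<dots>,x\<^sub>n,b)\<close>. Two-associativity with the inner
  argument list \<open>(b,\<dots>,b)\<close> gives \<open>\<theta>(a,\<dots>,a,b) = \<theta>(x\<^sub>1,\<dots>,x\<^sub>n,d)\<close>, and the choice
  \<open>x\<^sub>i = \<alpha>\<^sub>i(c,d)\<close> makes the right-hand side equal to \<open>c\<close>.\<close>

lemma two_associative_replicate:
  assumes "two_associative A n \<theta>"
    and "length xs = n" "set xs \<subseteq> A" "b \<in> A"
  shows "\<theta> (replicate n (\<theta> (xs @ [b])) @ [b]) = \<theta> (xs @ [\<theta> (replicate (Suc n) b)])"
proof -
  have "set (replicate n b) \<subseteq> A"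
    using \<open>b \<in> A\<close> by auto
  then have "\<theta> (xs @ [\<theta> (replicate n b @ [b])]) = \<theta> (map (\<lambda>y. \<theta> (xs @ [y])) (replicate n b) @ [b])"
    using assms unfolding two_associative_def by simp
  then show ?thesis
    by (simp add: replicate_append_same)
qed

theorem lemma4p1:
  fixes A :: "'a set" and n :: nat and \<theta> :: "'a list \<Rightarrow> 'a"
    and \<alpha> :: "nat \<Rightarrow> 'a \<Rightarrow> 'a \<Rightarrow> 'a" and e :: "nat \<Rightarrow> 'a"
  assumes n: "n \<ge> 1"
    and \<theta>_closed: "\<And>xs. length xs = Suc n \<Longrightarrow> set xs \<subseteq> A \<Longrightarrow> \<theta> xs \<in> A"
    and \<alpha>_closed: "\<And>i a b. i < n \<Longrightarrow> a \<in> A \<Longrightarrow> b \<in> A \<Longrightarrow> \<alpha> i a b \<in> A"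
    and e_in: "\<And>i. i < n \<Longrightarrow> e i \<in> A"
    and \<alpha>_diag: "\<And>i a. i < n \<Longrightarrow> a \<in> A \<Longrightarrow> \<alpha> i a a = e i"
    and \<alpha>_inv: "\<And>a b. a \<in> A \<Longrightarrow> b \<in> A \<Longrightarrow> \<theta> (map (\<lambda>i. \<alpha> i a b) [0..<n] @ [b]) = a"
    and assoc: "two_associative A n \<theta>"
    and b: "b \<in> A" and c: "c \<in> A"
  shows "(let a = \<theta> (map (\<lambda>i. \<alpha> i c (\<theta> (replicate (Suc n) b))) [0..<n] @ [b])
          in a \<in> A \<and> \<theta> (replicate n a @ [b]) = c)"
proof -
  define d where "d = \<theta> (replicate (Suc n) b)"
  define xs where "xs = map (\<lambda>i. \<alpha> i c d) [0..<n]"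
  have d_in: "d \<in> A"
    unfolding d_def using b by (intro \<theta>_closed) auto
  have xs: "length xs = n" "set xs \<subseteq> A"
    unfolding xs_def using \<alpha>_closed c d_in by auto
  have "\<theta> (xs @ [b]) \<in> A"
    using xs b by (intro \<theta>_closed) auto
  moreover have "\<theta> (replicate n (\<theta> (xs @ [b])) @ [b]) = c"
    using two_associative_replicate[OF assoc xs b] \<alpha>_inv[OF c d_in]
    by (simp add: xs_def d_def)
  ultimately show ?thesis
    by (simp add: Let_def xs_def d_def)
qed

end
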